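(* Let $\alpha\in(0,\pi/2)$, $\theta^*_d>0$ and $E_s$ satisfy $E_s>\frac{(\theta^*_d)^2}{2\cos^2\alpha}+\cos\alpha$. Put $$L^*_d=\sqrt{2E_s-(\theta^*_d)^2-2\cos\alpha},\qquad Y^*=\cos\alpha+\tfrac12\left(\theta^*_d\sin\alpha-L^*_d\cos\alpha\right)^2 .$$ Let $$b=4\theta^*_dL^*_d-2\frac{\theta^*_d}{L^*_d}\left((\theta^*_d)^2-\cos\alpha\right)-\tfrac12\pi^2\sin\alpha,\qquad \Delta=\pi^2(\theta^*_d)^2+8\alpha b .$$ Assume $\Delta\ge0$, and define the spring stiffness $$K=\frac{\left(\pi\theta^*_d+\sqrt{\Delta}\right)^2}{16\alpha^2},\qquad \varepsilon=1/\sqrt K .$$ For $Y\in(\cos\alpha,E_s)$ define $\theta_d(Y)$ and $L_d(Y)$ as in the context. Define the angle swept in stance by $$\Delta\theta(Y)=\pi\theta_d(Y)\,\varepsilon+\Big[4\theta_d(Y)L_d(Y)-2\frac{\theta_d(Y)}{L_d(Y)}\big(\theta_d(Y)^2-\cos\alpha\big)-\tfrac12\pi^2\sin\alpha\Big]\varepsilon^2,$$ and the apex return map by $$f(Y)=\cos\big(\alpha-\Delta\theta(Y)\big)+\Big[\sin\big(2\alpha-\Delta\theta(Y)\big)\sqrt{E_s-Y}+\cos\big(2\alpha-\Delta\theta(Y)\big)\sqrt{Y-\cos\alpha}\Big]^2 .$$ Let $d_i\Delta\theta^*=\frac{d}{dY}\Delta\theta(Y)\big|_{Y=Y^*}$ and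 $$D=\theta^*_d\cos2\alpha\,\sqrt{2E_s-(\theta^*_d)^2-2\cos\alpha}+\sin2\alpha\left[E_s-(\theta^*_d)^2-\cos\alpha\right].$$ If $$d_i\Delta\theta^*\in\left(0,\ \frac{2}{\sin\alpha+D}\right),$$ then $Y^*$ is a stable fixed point of $f$, that is, $f(Y^* )=Y^*$ and $|f'(Y^* )|<1$.
   Context: This concerns the dimensionless spring-mass (spring-loaded inverted pendulum) running model with leg rest length $1$, attack angle $\alpha$ (touch-down at $\theta=-\alpha$, height $\cos\alpha$) and total energy $E_s$. For an apex height $Y$, the touch-down angular velocity and radial speed are $$\theta_d(Y)=\sqrt2\left[\cos\alpha\sqrt{E_s-Y}-\sin\alpha\sqrt{Y-\cos\alpha}\right],\qquad L_d(Y)=\sqrt2\left[\sin\alpha\sqrt{E_s-Y}+\cos\alpha\sqrt{Y-\cos\alpha}\right].$$ The quantity $\Delta\theta$ is the second-order (in $\varepsilon=K^{-1/2}$) asymptotic approximation of the stance sweep angle. The map $f$ sends one flight apex height to the next. The stiffness $K$ is chosen so that the stance is symmetric at $Y^*$, i.e. $\Delta\theta(Y^* )=2\alpha$. Note that $\theta_d(Y^* )=\theta^*_d$ and $L_d(Y^* )=L^*_d$. *)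

theory Defs
  imports "HOL-Analysis.Analysis"
begin

text \<open>Dimensionless SLIP model: leg rest length 1, attack angle alpha, energy Es,
  eps = K^(-1/2).\<close>

definition theta_d :: "real \<Rightarrow> real \<Rightarrow> real \<Rightarrow> real" where
  "theta_d alpha Es Y = sqrt 2 * (cos alpha * sqrt (Es - Y) - sin alpha * sqrt (Y - cos alpha))"

definition L_d :: "real \<Rightarrow> real \<Rightarrow> real \<Rightarrow> real" where
  "L_d alpha Es Y = sqrt 2 * (sin alpha * sqrt (Es - Y) + cos alpha * sqrt (Y - cos alpha))"

definition Delta_theta :: "real \<Rightarrow> real \<Rightarrow> real \<Rightarrow> real \<Rightarrow> real" where
  "Delta_theta alpha Es eps Y =
     (let th = theta_d alpha Es Y; L = L_d alpha Es Y in
      pi * th * eps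
      + (4 * th * L - 2 * (th / L) * (th\<^sup>2 - cos alpha) - pi\<^sup>2 * sin alpha / 2) * eps\<^sup>2)"

definition apex_map :: "real \<Rightarrow> real \<Rightarrow> real \<Rightarrow> real \<Rightarrow> real" where
  "apex_map alpha Es eps Y =
     (let dt = Delta_theta alpha Es eps Y in
      cos (alpha - dt)
      + (sin (2 * alpha - dt) * sqrt (Es - Y) + cos (2 * alpha - dt) * sqrt (Y - cos alpha))\<^sup>2)"

end

(*
  At the apex height Ystar the touch-down speeds are exactly thd and Ld: the pair (theta_d, L_d)
  is sqrt 2 times the rotation by alpha of (sqrt (Es - Y), sqrt (Y - cos alpha)), and Ystar is
  where this rotation is inverted. The stiffness K makes eps = 4 alpha / (pi thd + sqrt Dl) the
  rationalized positive root of b eps^2 + pi thd eps = 2 alpha, so the stance sweeps exactly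
  2 alpha at Ystar. Whenever the sweep is 2 alpha, the apex map returns cos alpha + (Y - cos alpha)
  = Y, and differentiating there gives
  f'(Ystar) = 1 - Delta_theta'(Ystar) (sin alpha + 2 sqrt (Es - Ystar) sqrt (Ystar - cos alpha)),
  where the product term equals D.
*)
theory Submission
  imports Defs
begin

lemma rationalized_quadratic_root:
  fixes p b c :: real
  defines "x \<equiv> 2 * c / (p + sqrt (p\<^sup>2 + 4 * b * c))"
  assumes disc: "0 \<le> p\<^sup>2 + 4 * b * c" and denom: "p + sqrt (p\<^sup>2 + 4 * b * c) \<noteq> 0"
  shows "p * x + b * x\<^sup>2 = c"
proof -
  define q where "q = sqrt (p\<^sup>2 + 4 * b * c)"
  have q2: "q\<^sup>2 = p\<^sup>2 + 4 * b * c" unfolding q_def using disc by simp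
  have pq: "p + q \<noteq> 0" using denom unfolding q_def .
  have xq: "x * (p + q) = 2 * c" using pq unfolding x_def q_def[symmetric] by simp
  have "(2 * b * x) * (p + q) = 2 * b * (x * (p + q))" by simp
  also have "\<dots> = q\<^sup>2 - p\<^sup>2" using xq q2 by simp
  also have "\<dots> = (q - p) * (p + q)" by (simp add: power2_eq_square algebra_simps)
  finally have q_eq: "q = p + 2 * b * x" using pq by simp
  have "p * x + b * x\<^sup>2 = x * (p + q) / 2"
    unfolding q_eq by (simp add: power2_eq_square algebra_simps)
  then show ?thesis using xq by simp
qed

lemma stiffness_solves_sweep_equation:
  fixes alpha p b :: real
  defines "eps \<equiv> 1 / sqrt ((p + sqrt (p\<^sup>2 + 8 * alpha * b))\<^sup>2 / (16 * alpha\<^sup>2))"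
  assumes alpha: "0 < alpha" and p: "0 < p" and disc: "0 \<le> p\<^sup>2 + 8 * alpha * b"
  shows "p * eps + b * eps\<^sup>2 = 2 * alpha"
proof -
  have disc_eq: "p\<^sup>2 + 4 * b * (2 * alpha) = p\<^sup>2 + 8 * alpha * b" by simp
  have pos: "0 < p + sqrt (p\<^sup>2 + 8 * alpha * b)"
    by (intro add_pos_nonneg p real_sqrt_ge_zero disc)
  have "eps = 2 * (2 * alpha) / (p + sqrt (p\<^sup>2 + 8 * alpha * b))"
    using alpha pos unfolding eps_def by (simp add: real_sqrt_divide real_sqrt_mult)
  then show ?thesis
    using rationalized_quadratic_root[of p b "2 * alpha"] disc pos unfolding disc_eq by simp
qed

(* The second conclusion puts the apex strictly above the touch-down height, since
  (Ld cos alpha - thd sin alpha) / sqrt 2 is sqrt (Ystar - cos alpha). *)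
lemma energy_bound_touchdown_speeds:
  fixes alpha thd Es :: real
  assumes alpha: "0 < alpha" "alpha < pi / 2"
    and Es: "Es > thd\<^sup>2 / (2 * (cos alpha)\<^sup>2) + cos alpha"
  shows "0 < 2 * Es - thd\<^sup>2 - 2 * cos alpha"
    and "thd * sin alpha < sqrt (2 * Es - thd\<^sup>2 - 2 * cos alpha) * cos alpha"
proof -
  define c s where "c = cos alpha" and "s = sin alpha"
  define Ld where "Ld = sqrt (2 * Es - thd\<^sup>2 - 2 * c)"
  have c: "0 < c" unfolding c_def using alpha by (intro cos_gt_zero_pi) auto
  have c2: "0 < c\<^sup>2" "c\<^sup>2 \<le> 1" using c abs_cos_le_one[of alpha] by (simp_all add: c_def abs_square_le_1)
  have "thd\<^sup>2 / c\<^sup>2 < 2 * Es - 2 * c"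
    using Es unfolding c_def[symmetric] by simp
  then have Es_c2: "thd\<^sup>2 < (2 * Es - 2 * c) * c\<^sup>2"
    using c2 by (simp add: pos_divide_less_eq)
  have "thd\<^sup>2 * c\<^sup>2 \<le> thd\<^sup>2" using c2 by (simp add: mult_left_le)
  then have "thd\<^sup>2 * c\<^sup>2 < (2 * Es - 2 * c) * c\<^sup>2" using Es_c2 by linarith
  then have radicand: "0 < 2 * Es - thd\<^sup>2 - 2 * c" using c2 by simp
  then show "0 < 2 * Es - thd\<^sup>2 - 2 * cos alpha" unfolding c_def .
  have "(Ld * c)\<^sup>2 = (2 * Es - 2 * c) * c\<^sup>2 - thd\<^sup>2 * c\<^sup>2"
    using radicand unfolding Ld_def power_mult_distrib by (simp add: algebra_simps)
  also have "\<dots> > thd\<^sup>2 - thd\<^sup>2 * c\<^sup>2" using Es_c2 by simp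
  also have "thd\<^sup>2 - thd\<^sup>2 * c\<^sup>2 = (thd * s)\<^sup>2"
    unfolding s_def c_def power_mult_distrib by (simp add: sin_squared_eq algebra_simps)
  finally have "(thd * s)\<^sup>2 < (Ld * c)\<^sup>2" .
  moreover have "0 \<le> Ld * c" unfolding Ld_def using c radicand by simp
  ultimately show "thd * sin alpha < sqrt (2 * Es - thd\<^sup>2 - 2 * cos alpha) * cos alpha"
    unfolding Ld_def c_def s_def by (rule power_less_imp_less_base)
qed

lemma apex_height_sqrt_terms:
  fixes alpha thd Ld Es :: real
  defines "Y \<equiv> cos alpha + (thd * sin alpha - Ld * cos alpha)\<^sup>2 / 2"
  assumes energy: "Ld\<^sup>2 = 2 * Es - thd\<^sup>2 - 2 * cos alpha"
    and below: "thd * sin alpha \<le> Ld * cos alpha"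
    and ahead: "0 \<le> thd * cos alpha + Ld * sin alpha"
  shows "sqrt (Es - Y) = (thd * cos alpha + Ld * sin alpha) / sqrt 2"
    and "sqrt (Y - cos alpha) = (Ld * cos alpha - thd * sin alpha) / sqrt 2"
proof -
  have "(thd * sin alpha - Ld * cos alpha)\<^sup>2 + (thd * cos alpha + Ld * sin alpha)\<^sup>2
        = (thd\<^sup>2 + Ld\<^sup>2) * ((sin alpha)\<^sup>2 + (cos alpha)\<^sup>2)"
    by algebra
  then have "Es - Y = ((thd * cos alpha + Ld * sin alpha) / sqrt 2)\<^sup>2"
    unfolding Y_def using energy by (simp add: power_divide)
  then show "sqrt (Es - Y) = (thd * cos alpha + Ld * sin alpha) / sqrt 2"
    using ahead by simp
  have "Y - cos alpha = ((Ld * cos alpha - thd * sin alpha) / sqrt 2)\<^sup>2"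
    unfolding Y_def by (simp add: power_divide power2_commute)
  then show "sqrt (Y - cos alpha) = (Ld * cos alpha - thd * sin alpha) / sqrt 2"
    using below by simp
qed

lemma touchdown_speeds_at_apex_height:
  fixes alpha thd Ld Es :: real
  defines "Y \<equiv> cos alpha + (thd * sin alpha - Ld * cos alpha)\<^sup>2 / 2"
  assumes energy: "Ld\<^sup>2 = 2 * Es - thd\<^sup>2 - 2 * cos alpha"
    and below: "thd * sin alpha \<le> Ld * cos alpha"
    and ahead: "0 \<le> thd * cos alpha + Ld * sin alpha"
  shows "theta_d alpha Es Y = thd" and "L_d alpha Es Y = Ld"
proof -
  note sqrt_terms = apex_height_sqrt_terms[OF energy below ahead, folded Y_def]
  have "theta_d alpha Es Y
        = cos alpha * (thd * cos alpha + Ld * sin alpha) - sin alpha * (Ld * cos alpha - thd * sin alpha)"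
    unfolding theta_d_def sqrt_terms by (simp add: field_simps)
  also have "\<dots> = thd * ((sin alpha)\<^sup>2 + (cos alpha)\<^sup>2)" by algebra
  finally show "theta_d alpha Es Y = thd" by simp
  have "L_d alpha Es Y
        = sin alpha * (thd * cos alpha + Ld * sin alpha) + cos alpha * (Ld * cos alpha - thd * sin alpha)"
    unfolding L_d_def sqrt_terms by (simp add: field_simps)
  also have "\<dots> = Ld * ((sin alpha)\<^sup>2 + (cos alpha)\<^sup>2)" by algebra
  finally show "L_d alpha Es Y = Ld" by simp
qed

lemma touchdown_speeds_product:
  fixes a thd Ld :: real
  shows "(thd * cos a + Ld * sin a) * (Ld * cos a - thd * sin a)
         = thd * Ld * cos (2 * a) + sin (2 * a) * (Ld\<^sup>2 - thd\<^sup>2) / 2"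
  unfolding cos_double sin_double by (simp add: power2_eq_square field_simps)

lemma Delta_theta_differentiable:
  assumes "cos alpha < Y" "Y < Es" "L_d alpha Es Y \<noteq> 0"
  shows "Delta_theta alpha Es eps differentiable (at Y)"
  using assms unfolding Delta_theta_def[abs_def] Let_def theta_d_def L_d_def real_differentiable_def
  by (intro exI) (auto intro!: derivative_eq_intros)

lemma apex_map_deriv_at_symmetric_stance:
  assumes dt: "(Delta_theta alpha Es eps has_real_derivative g') (at Y)"
    and sym: "Delta_theta alpha Es eps Y = 2 * alpha"
    and Y: "cos alpha < Y" "Y < Es"
  shows "(apex_map alpha Es eps has_real_derivative
          1 - g' * (sin alpha + 2 * sqrt (Es - Y) * sqrt (Y - cos alpha))) (at Y)"
  unfolding apex_map_def[abs_def] Let_def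
  using Y by (auto intro!: derivative_eq_intros dt simp: sym field_simps)

lemma apex_map_fixed_at_symmetric_stance:
  assumes "Delta_theta alpha Es eps Y = 2 * alpha" "cos alpha \<le> Y"
  shows "apex_map alpha Es eps Y = Y"
  using assms unfolding apex_map_def Let_def by simp

lemma abs_one_minus_mult_lt_one:
  fixes g d :: real
  assumes "0 < g" "g < 2 / d"
  shows "\<bar>1 - g * d\<bar> < 1"
proof -
  have "0 < 2 / d" using assms by linarith
  then have "0 < d" by (simp add: zero_less_divide_iff)
  then have "0 < g * d" "g * d < 2" using assms by (simp_all add: field_simps)
  then show ?thesis by (simp add: abs_less_iff)
qed

lemma symmetric_apex_height:
  fixes alpha thd Es :: real
  assumes alpha: "0 < alpha" "alpha < pi / 2"
    and thd: "0 < thd"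
    and Es: "Es > thd\<^sup>2 / (2 * (cos alpha)\<^sup>2) + cos alpha"
  defines "Ld \<equiv> sqrt (2 * Es - thd\<^sup>2 - 2 * cos alpha)"
  defines "Ystar \<equiv> cos alpha + (thd * sin alpha - Ld * cos alpha)\<^sup>2 / 2"
  shows "cos alpha < Ystar" and "Ystar < Es" and "0 < Ld"
    and "theta_d alpha Es Ystar = thd" and "L_d alpha Es Ystar = Ld"
    and "2 * sqrt (Es - Ystar) * sqrt (Ystar - cos alpha)
         = thd * cos (2 * alpha) * Ld + sin (2 * alpha) * (Es - thd\<^sup>2 - cos alpha)"
proof -
  have c: "0 < cos alpha" using alpha by (intro cos_gt_zero_pi) auto
  have s: "0 < sin alpha" using alpha by (intro sin_gt_zero) auto
  have energy: "Ld\<^sup>2 = 2 * Es - thd\<^sup>2 - 2 * cos alpha"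
    unfolding Ld_def using energy_bound_touchdown_speeds(1)[OF alpha Es] by simp
  have below: "thd * sin alpha < Ld * cos alpha"
    unfolding Ld_def by (rule energy_bound_touchdown_speeds(2)[OF alpha Es])
  moreover have "0 < thd * sin alpha" using thd s by simp
  ultimately have "0 < Ld * cos alpha" by linarith
  then show Ld: "0 < Ld" using c by (simp add: zero_less_mult_iff)
  have ahead: "0 < thd * cos alpha + Ld * sin alpha" using thd c Ld s by (simp add: add_pos_pos)
  note sqrt_terms = apex_height_sqrt_terms[OF energy less_imp_le[OF below] less_imp_le[OF ahead],
      folded Ystar_def]
  show "theta_d alpha Es Ystar = thd" "L_d alpha Es Ystar = Ld"
    using touchdown_speeds_at_apex_height[OF energy less_imp_le[OF below] less_imp_le[OF ahead]]
    unfolding Ystar_def by simp_all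
  have "0 < sqrt (Ystar - cos alpha)" "0 < sqrt (Es - Ystar)"
    unfolding sqrt_terms using below ahead by simp_all
  then show "cos alpha < Ystar" "Ystar < Es" by simp_all
  have "2 * sqrt (Es - Ystar) * sqrt (Ystar - cos alpha)
        = (thd * cos alpha + Ld * sin alpha) * (Ld * cos alpha - thd * sin alpha)"
    unfolding sqrt_terms by (simp add: field_simps)
  also have "\<dots> = thd * cos (2 * alpha) * Ld + sin (2 * alpha) * (Es - thd\<^sup>2 - cos alpha)"
    unfolding touchdown_speeds_product energy by (simp add: field_simps)
  finally show "2 * sqrt (Es - Ystar) * sqrt (Ystar - cos alpha)
      = thd * cos (2 * alpha) * Ld + sin (2 * alpha) * (Es - thd\<^sup>2 - cos alpha)" .
qed

theorem theorem2:
  fixes alpha thd Es :: real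
  assumes alpha: "0 < alpha" "alpha < pi / 2"
    and thd: "0 < thd"
    and Es: "Es > thd\<^sup>2 / (2 * (cos alpha)\<^sup>2) + cos alpha"
  defines "Ld \<equiv> sqrt (2 * Es - thd\<^sup>2 - 2 * cos alpha)"
  defines "Ystar \<equiv> cos alpha + (thd * sin alpha - Ld * cos alpha)\<^sup>2 / 2"
  defines "b \<equiv> 4 * thd * Ld - 2 * (thd / Ld) * (thd\<^sup>2 - cos alpha) - pi\<^sup>2 * sin alpha / 2"
  defines "Dl \<equiv> pi\<^sup>2 * thd\<^sup>2 + 8 * alpha * b"
  defines "K \<equiv> (pi * thd + sqrt Dl)\<^sup>2 / (16 * alpha\<^sup>2)"
  defines "eps \<equiv> 1 / sqrt K"
  defines "D \<equiv> thd * cos (2 * alpha) * sqrt (2 * Es - thd\<^sup>2 - 2 * cos alpha)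
               + sin (2 * alpha) * (Es - thd\<^sup>2 - cos alpha)"
  assumes Dl_nonneg: "Dl \<ge> 0"
    and deriv_pos: "deriv (Delta_theta alpha Es eps) Ystar > 0"
    and deriv_bound: "deriv (Delta_theta alpha Es eps) Ystar < 2 / (sin alpha + D)"
  shows "apex_map alpha Es eps Ystar = Ystar
         \<and> apex_map alpha Es eps differentiable (at Ystar)
         \<and> \<bar>deriv (apex_map alpha Es eps) Ystar\<bar> < 1"
proof -
  note apex = symmetric_apex_height[OF alpha thd Es, folded Ld_def, folded Ystar_def]
  have "Dl = (pi * thd)\<^sup>2 + 8 * alpha * b" unfolding Dl_def by (simp add: power_mult_distrib)
  then have sym: "Delta_theta alpha Es eps Ystar = 2 * alpha"
    using stiffness_solves_sweep_equation[of alpha "pi * thd" b] alpha thd Dl_nonneg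
    unfolding Delta_theta_def Let_def apex(4,5) b_def[symmetric] eps_def K_def by simp
  have "Delta_theta alpha Es eps differentiable (at Ystar)"
    using Delta_theta_differentiable apex by simp
  then have "(Delta_theta alpha Es eps has_real_derivative deriv (Delta_theta alpha Es eps) Ystar)
      (at Ystar)" by (simp add: DERIV_deriv_iff_real_differentiable)
  from apex_map_deriv_at_symmetric_stance[OF this sym apex(1,2)]
  have "(apex_map alpha Es eps has_real_derivative
      1 - deriv (Delta_theta alpha Es eps) Ystar * (sin alpha + D)) (at Ystar)"
    unfolding apex(6) D_def Ld_def .
  then show ?thesis
    using apex_map_fixed_at_symmetric_stance[OF sym] apex(1)
      abs_one_minus_mult_lt_one[OF deriv_pos deriv_bound]
    by (auto simp: DERIV_imp_deriv real_differentiable_def)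
qed

end
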